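(* Let $\mathcal{U}$ be a separable Banach space with dual $\mathcal{U}^*$ and duality pairing $[\cdot,\cdot]$, endowed with a quadratic norm given by a linear bijection $\mathcal{K}:\mathcal{U}^*\to\mathcal{U}$ which is symmetric and positive, $\|u\|^2=[\mathcal{K}^{-1}u,u]$. Let $\phi_1,\dots,\phi_N\in\mathcal{U}^*$ be nontrivial, $\boldsymbol{\phi}=(\phi_1,\dots,\phi_N)$, and $\Theta\in\mathbb{R}^{N\times N}$ with $\Theta_{i,n}=[\phi_i,\mathcal{K}\phi_n]$, assumed invertible; let $\chi_i=\sum_{n=1}^N(\Theta^{-1})_{i,n}\mathcal{K}\phi_n$. Let $G:\mathbb{R}^N\to\mathbb{R}^I$ and $F:\mathbb{R}^N\to\mathbb{R}^M$ be (possibly nonlinear) functions, $\gamma$ a nonzero real parameter, and fix $(\mathbf{o},\mathbf{y})\in\mathbb{R}^I\times\mathbb{R}^M$. Then $u^\dagger\in\mathcal{U}$ is a minimizer of $$\min_{u\in\mathcal{U}}\ \|u\|^2+\frac{1}{\gamma^2}|G([\boldsymbol{\phi},u])-\mathbf{o}|^2\quad\text{s.t.}\quad F([\boldsymbol{\phi},u])=\mathbf{y}$$ if and only if $u^\dagger=\sum_{n=1}^N z^\dagger_n\chi_n$ where $\mathbf{z}^\dagger$ is a minimizer of $$\min_{\mathbf{z}\in\mathbb{R}^N}\ \mathbf{z}^T\Theta^{-1}\mathbf{z}+\frac{1}{\gamma^2}|G(\mathbf{z})-\mathbf{o}|^2\quad\text{s.t.}\quad F(\mathbf{z})=\mathb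f{y}.$$
   Context: Symmetric means $[\mathcal{K}\phi,\varphi]=[\mathcal{K}\varphi,\phi]$ and positive means $[\mathcal{K}\phi,\phi]>0$ for $\phi\ne0$. $[\boldsymbol{\phi},u]$ denotes the vector $([\phi_1,u],\dots,[\phi_N,u])\in\mathbb{R}^N$; $|\cdot|$ is the Euclidean norm. *)

theory Defs
  imports "HOL-Analysis.Analysis"
begin

end

(* The vectors chi are biorthogonal to the measurements phi, so z \<mapsto> \<Sum>n. z n chi n is a right
   inverse S of the measurement map P u = [\<phi>, u].  Its range is K (span \<phi>), and u - S (P u) is
   annihilated by every \<phi> n, hence orthogonal to that range for the inner product
   [K\<^sup>-\<^sup>1 \<cdot>, \<cdot>]; this gives |u|\<^sup>2 = |S (P u)|\<^sup>2 + |u - S (P u)|\<^sup>2 with |S z|\<^sup>2 = z\<^sup>T \<Theta>\<^sup>-\<^sup>1 z.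
   As constraint and misfit depend on u only through P u, replacing u by S (P u) never
   increases the objective and strictly decreases it unless u = S (P u). *)

theory Submission
  imports Defs
begin

lemma bij_linear_imp_inv_linear:
  fixes f :: "'a::real_vector \<Rightarrow> 'b::real_vector"
  assumes "linear f" "bij f"
  shows "linear (inv f)"
proof (rule linearI)
  have f_inv_f: "f (inv f b) = b" for b
    using assms(2) by (simp add: bij_is_surj surj_f_inv_f)
  have inv_f_f: "inv f (f a) = a" for a
    using assms(2) by (simp add: bij_is_inj)
  show "inv f (b + c) = inv f b + inv f c" for b c
    using inv_f_f[of "inv f b + inv f c"] by (simp add: linear_add[OF assms(1)] f_inv_f)
  show "inv f (r *\<^sub>R b) = r *\<^sub>R inv f b" for r b
    using inv_f_f[of "r *\<^sub>R inv f b"] by (simp add: linear_scale[OF assms(1)] f_inv_f)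
qed

lemma matrix_mul_matrix_inv:
  assumes "invertible (A :: 'a::semiring_1^'n^'m)"
  shows "A ** matrix_inv A = mat 1" "matrix_inv A ** A = mat 1"
  using someI_ex[OF assms[unfolded invertible_def]] by (simp_all add: matrix_inv_def)

lemma transpose_matrix_inv_symmetric:
  fixes A :: "'a::comm_semiring_1^'n^'n"
  assumes "transpose A = A" "invertible A"
  shows "transpose (matrix_inv A) = matrix_inv A"
proof -
  have "transpose (matrix_inv A) = transpose (matrix_inv A) ** (A ** matrix_inv A)"
    by (simp add: matrix_mul_matrix_inv assms(2))
  also have "\<dots> = transpose (A ** matrix_inv A) ** matrix_inv A"
    using assms(1) by (simp add: matrix_mul_assoc matrix_transpose_mul)
  finally show ?thesis
    by (simp add: matrix_mul_matrix_inv assms(2))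
qed

lemma constrained_argmin_reduction:
  fixes f :: "'u \<Rightarrow> 'a::ordered_ab_group_add"
  assumes P_S: "\<And>z. P (S z) = z"
    and f_S_P_le: "\<And>u. f (S (P u)) \<le> f u"
    and f_S_P_eq: "\<And>u. f u \<le> f (S (P u)) \<Longrightarrow> u = S (P u)"
  shows "(C (P u\<^sub>0) \<and> (\<forall>u. C (P u) \<longrightarrow> f u\<^sub>0 + R (P u\<^sub>0) \<le> f u + R (P u)))
     \<longleftrightarrow> (\<exists>z\<^sub>0. u\<^sub>0 = S z\<^sub>0 \<and> C z\<^sub>0 \<and> (\<forall>z. C z \<longrightarrow> f (S z\<^sub>0) + R z\<^sub>0 \<le> f (S z) + R z))"
    (is "?min_u \<longleftrightarrow> ?min_z")
proof
  assume min_u: ?min_u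
  have "f u\<^sub>0 + R (P u\<^sub>0) \<le> f (S (P u\<^sub>0)) + R (P u\<^sub>0)"
    using min_u min_u[THEN conjunct2, rule_format, of "S (P u\<^sub>0)"] by (simp add: P_S)
  then have u\<^sub>0_eq: "u\<^sub>0 = S (P u\<^sub>0)"
    by (simp add: f_S_P_eq)
  have "f (S (P u\<^sub>0)) + R (P u\<^sub>0) \<le> f (S z) + R z" if "C z" for z
    using min_u[THEN conjunct2, rule_format, of "S z"] that by (simp add: P_S flip: u\<^sub>0_eq)
  with min_u u\<^sub>0_eq show ?min_z
    by blast
next
  assume ?min_z
  then obtain z\<^sub>0 where u\<^sub>0: "u\<^sub>0 = S z\<^sub>0" and "C z\<^sub>0"
    and min_z: "\<forall>z. C z \<longrightarrow> f (S z\<^sub>0) + R z\<^sub>0 \<le> f (S z) + R z"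
    by blast
  have "f (S z\<^sub>0) + R z\<^sub>0 \<le> f u + R (P u)" if "C (P u)" for u
  proof -
    have "f (S z\<^sub>0) + R z\<^sub>0 \<le> f (S (P u)) + R (P u)"
      using min_z that by (simp add: P_S)
    also have "\<dots> \<le> f u + R (P u)"
      using f_S_P_le by (rule add_right_mono)
    finally show ?thesis .
  qed
  with \<open>C z\<^sub>0\<close> show ?min_u
    by (simp add: u\<^sub>0 P_S)
qed

locale quadratic_norm_operator =
  fixes K :: "('u::real_normed_vector \<Rightarrow>\<^sub>L real) \<Rightarrow> 'u"
  assumes linear_K: "linear K"
    and bij_K: "bij K"
    and K_symmetric: "\<And>\<psi> \<rho>. blinfun_apply \<rho> (K \<psi>) = blinfun_apply \<psi> (K \<rho>)"
    and norm_square_eq: "\<And>u. (norm u)\<^sup>2 = blinfun_apply (inv K u) u"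
begin

lemma K_inv_K [simp]: "K (inv K u) = u"
  by (simp add: bij_K bij_is_surj surj_f_inv_f)

lemma inv_K_K [simp]: "inv K (K \<psi>) = \<psi>"
  by (simp add: bij_K bij_is_inj)

lemma linear_inv_K: "linear (inv K)"
  by (simp add: bij_linear_imp_inv_linear linear_K bij_K)

lemma norm_add_square_orthogonal:
  assumes "blinfun_apply (inv K v) d = 0"
  shows "(norm (v + d))\<^sup>2 = (norm v)\<^sup>2 + (norm d)\<^sup>2"
proof -
  have d_v: "blinfun_apply (inv K d) v = 0"
    using K_symmetric[of "inv K v" "inv K d"] assms by simp
  have "(norm (v + d))\<^sup>2 = blinfun_apply (inv K v + inv K d) (v + d)"
    by (simp add: norm_square_eq linear_add[OF linear_inv_K])
  also have "\<dots> = blinfun_apply (inv K v) v + blinfun_apply (inv K d) d"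
    by (simp add: blinfun.add_left blinfun.add_right assms d_v)
  finally show ?thesis
    by (simp add: norm_square_eq)
qed

end

locale optimal_recovery = quadratic_norm_operator K
  for K :: "('u::real_normed_vector \<Rightarrow>\<^sub>L real) \<Rightarrow> 'u" +
  fixes \<phi> :: "'n::finite \<Rightarrow> ('u \<Rightarrow>\<^sub>L real)"
    and \<Theta> :: "real ^ 'n ^ 'n"
    and chi :: "'n \<Rightarrow> 'u"
  assumes \<Theta>_eq: "\<And>i n. \<Theta> $ i $ n = blinfun_apply (\<phi> i) (K (\<phi> n))"
    and invertible_\<Theta>: "invertible \<Theta>"
    and chi_eq: "\<And>i. chi i = (\<Sum>n\<in>UNIV. (matrix_inv \<Theta> $ i $ n) *\<^sub>R K (\<phi> n))"
begin

definition measurements :: "'u \<Rightarrow> real ^ 'n"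
  where "measurements u = (\<chi> n. blinfun_apply (\<phi> n) u)"

definition recovery :: "real ^ 'n \<Rightarrow> 'u"
  where "recovery z = (\<Sum>n\<in>UNIV. z $ n *\<^sub>R chi n)"

lemma transpose_\<Theta>: "transpose \<Theta> = \<Theta>"
proof -
  have "\<Theta> $ j $ i = \<Theta> $ i $ j" for i j
    unfolding \<Theta>_eq by (rule K_symmetric)
  then show ?thesis
    by (simp add: transpose_def vec_eq_iff)
qed

lemma matrix_inv_\<Theta>_symmetric: "matrix_inv \<Theta> $ i $ j = matrix_inv \<Theta> $ j $ i"
proof -
  have "transpose (matrix_inv \<Theta>) = matrix_inv \<Theta>"
    using transpose_\<Theta> invertible_\<Theta> by (rule transpose_matrix_inv_symmetric)
  then have "transpose (matrix_inv \<Theta>) $ j $ i = matrix_inv \<Theta> $ j $ i"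
    by simp
  then show ?thesis
    by (simp add: transpose_def)
qed

lemma \<phi>_chi: "blinfun_apply (\<phi> i) (chi j) = (if i = j then 1 else 0)"
proof -
  have "blinfun_apply (\<phi> i) (chi j) = (\<Sum>n\<in>UNIV. matrix_inv \<Theta> $ j $ n * \<Theta> $ i $ n)"
    by (simp add: chi_eq blinfun.sum_right blinfun.scaleR_right \<Theta>_eq)
  also have "\<dots> = (\<Theta> ** matrix_inv \<Theta>) $ i $ j"
    by (simp add: matrix_matrix_mult_def matrix_inv_\<Theta>_symmetric[of j] mult.commute)
  finally show ?thesis
    by (simp add: matrix_mul_matrix_inv invertible_\<Theta> mat_def)
qed

lemma \<phi>_recovery: "blinfun_apply (\<phi> i) (recovery z) = z $ i"
proof -
  have "blinfun_apply (\<phi> i) (recovery z) = (\<Sum>j\<in>UNIV. z $ j * blinfun_apply (\<phi> i) (chi j))"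
    by (simp add: recovery_def blinfun.sum_right blinfun.scaleR_right)
  then show ?thesis
    by (simp add: \<phi>_chi if_distrib cong: if_cong)
qed

lemma measurements_recovery [simp]: "measurements (recovery z) = z"
  by (simp add: measurements_def vec_eq_iff \<phi>_recovery)

lemma inv_K_recovery: "inv K (recovery z) = (\<Sum>n\<in>UNIV. (matrix_inv \<Theta> *v z) $ n *\<^sub>R \<phi> n)"
proof -
  have "K (\<Sum>n\<in>UNIV. (matrix_inv \<Theta> *v z) $ n *\<^sub>R \<phi> n)
      = (\<Sum>n\<in>UNIV. (\<Sum>j\<in>UNIV. z $ j * matrix_inv \<Theta> $ j $ n) *\<^sub>R K (\<phi> n))"
    by (simp add: linear_sum[OF linear_K] linear_scale[OF linear_K] matrix_vector_mult_def
        matrix_inv_\<Theta>_symmetric[of n for n] mult.commute)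
  also have "\<dots> = (\<Sum>j\<in>UNIV. \<Sum>n\<in>UNIV. z $ j *\<^sub>R (matrix_inv \<Theta> $ j $ n *\<^sub>R K (\<phi> n)))"
    by (subst sum.swap) (simp add: scaleR_sum_left)
  also have "\<dots> = recovery z"
    by (simp add: recovery_def chi_eq scaleR_sum_right)
  finally show ?thesis
    by (metis inv_K_K)
qed

lemma norm_recovery: "(norm (recovery z))\<^sup>2 = z \<bullet> (matrix_inv \<Theta> *v z)"
  by (simp add: norm_square_eq inv_K_recovery blinfun.sum_left blinfun.scaleR_left \<phi>_recovery
      inner_vec_def mult.commute)

lemma norm_square_split:
  "(norm u)\<^sup>2 = (norm (recovery (measurements u)))\<^sup>2 + (norm (u - recovery (measurements u)))\<^sup>2"
proof -
  let ?v = "recovery (measurements u)"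
  have "blinfun_apply (inv K ?v) (u - ?v) = 0"
    by (simp add: inv_K_recovery blinfun.sum_left blinfun.scaleR_left blinfun.diff_right
        \<phi>_recovery measurements_def)
  then have "(norm (?v + (u - ?v)))\<^sup>2 = (norm ?v)\<^sup>2 + (norm (u - ?v))\<^sup>2"
    by (rule norm_add_square_orthogonal)
  then show ?thesis
    by simp
qed

lemma norm_recovery_measurements_le: "(norm (recovery (measurements u)))\<^sup>2 \<le> (norm u)\<^sup>2"
  using norm_square_split[of u] by simp

lemma eq_recovery_measurements_if_norm_le:
  assumes "(norm u)\<^sup>2 \<le> (norm (recovery (measurements u)))\<^sup>2"
  shows "u = recovery (measurements u)"
  using assms norm_square_split[of u] by simp

end

theorem proposition2p3:
  fixes K :: "('u::banach \<Rightarrow>\<^sub>L real) \<Rightarrow> 'u"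
    and \<phi> :: "'n::finite \<Rightarrow> ('u \<Rightarrow>\<^sub>L real)"
    and \<Theta> :: "real ^ 'n ^ 'n"
    and chi :: "'n \<Rightarrow> 'u"
    and G :: "real ^ 'n \<Rightarrow> real ^ 'i::finite"
    and F :: "real ^ 'n \<Rightarrow> real ^ 'm::finite"
    and \<gamma> :: real
    and obs :: "real ^ 'i" and y :: "real ^ 'm"
    and u\<^sub>0 :: 'u
  assumes separable: "separable_space (euclidean :: 'u topology)"
    and K_linear: "linear K"
    and K_bij: "bij K"
    and K_sym: "\<And>\<psi> \<rho>. blinfun_apply \<rho> (K \<psi>) = blinfun_apply \<psi> (K \<rho>)"
    and K_pos: "\<And>\<psi>. \<psi> \<noteq> 0 \<Longrightarrow> blinfun_apply \<psi> (K \<psi>) > 0"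
    and norm_K: "\<And>u. (norm u)\<^sup>2 = blinfun_apply (inv K u) u"
    and \<phi>_nontriv: "\<And>n. \<phi> n \<noteq> 0"
    and \<Theta>_def: "\<And>i n. \<Theta> $ i $ n = blinfun_apply (\<phi> i) (K (\<phi> n))"
    and \<Theta>_inv: "invertible \<Theta>"
    and chi_def: "\<And>i. chi i = (\<Sum>n\<in>UNIV. (matrix_inv \<Theta> $ i $ n) *\<^sub>R K (\<phi> n))"
    and \<gamma>_nz: "\<gamma> \<noteq> 0"
  shows "(F (\<chi> n. blinfun_apply (\<phi> n) u\<^sub>0) = y \<and>
          (\<forall>u. F (\<chi> n. blinfun_apply (\<phi> n) u) = y \<longrightarrow>
             (norm u\<^sub>0)\<^sup>2 + (1 / \<gamma>\<^sup>2) * (norm (G (\<chi> n. blinfun_apply (\<phi> n) u\<^sub>0) - obs))\<^sup>2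
             \<le> (norm u)\<^sup>2 + (1 / \<gamma>\<^sup>2) * (norm (G (\<chi> n. blinfun_apply (\<phi> n) u) - obs))\<^sup>2))
     \<longleftrightarrow>
     (\<exists>z\<^sub>0 :: real ^ 'n.
        u\<^sub>0 = (\<Sum>n\<in>UNIV. z\<^sub>0 $ n *\<^sub>R chi n) \<and>
        F z\<^sub>0 = y \<and>
        (\<forall>z. F z = y \<longrightarrow>
           z\<^sub>0 \<bullet> (matrix_inv \<Theta> *v z\<^sub>0) + (1 / \<gamma>\<^sup>2) * (norm (G z\<^sub>0 - obs))\<^sup>2
           \<le> z \<bullet> (matrix_inv \<Theta> *v z) + (1 / \<gamma>\<^sup>2) * (norm (G z - obs))\<^sup>2))"
proof -
  \<comment> \<open>Separability, positivity of K (implied by norm_K), \<phi> n \<noteq> 0 and \<gamma> \<noteq> 0 are not needed;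
     for \<gamma> = 0 both sides carry the same junk weight 1 / 0 = 0.\<close>
  interpret optimal_recovery K \<phi> \<Theta> chi
    by (intro optimal_recovery.intro quadratic_norm_operator.intro optimal_recovery_axioms.intro)
      (fact K_linear K_bij K_sym norm_K \<Theta>_def \<Theta>_inv chi_def)+
  note constrained_argmin_reduction[where P = measurements and S = recovery
      and f = "\<lambda>u. (norm u)\<^sup>2" and C = "\<lambda>z. F z = y"
      and R = "\<lambda>z. (1 / \<gamma>\<^sup>2) * (norm (G z - obs))\<^sup>2",
      OF measurements_recovery norm_recovery_measurements_le eq_recovery_measurements_if_norm_le]
  then show ?thesis
    unfolding norm_recovery unfolding measurements_def recovery_def .
qed

end
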